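(* Let $d>1$. For every integer $s$ with $2\le s\le 2^d$, \[\lambda^*(d,s)\le \left(\frac{s}{s-1}\right)^{s-1}\lambda^*(d,s-1)\le e\,\lambda^*(d,s-1),\] and for every integer $s$ with $0\le s\le 2^d-2$, \[\lambda^*(d,s)\le \left(\frac{2^d-s}{2^d-s-1}\right)^{2^d-s-1}\lambda^*(d,s+1)\le e\,\lambda^*(d,s+1).\]
   Context: For integers $n\ge d\ge 1$, a $d$-flat in $\mathbb{F}_2^n$ is a set $x_0+U$ with $x_0\in\mathbb{F}_2^n$ and $U$ a $d$-dimensional linear subspace of $\mathbb{F}_2^n$. For $A\subseteq\mathbb{F}_2^n$ and an integer $0\le s\le 2^d$, $\lambda^*(n,d,s,A)$ denotes the fraction of $d$-flats $Q$ in $\mathbb{F}_2^n$ with $|Q\cap A|=s$. Let $\lambda^*(n,d,s)=\max_{A\subseteq\mathbb{F}_2^n}\lambda^*(n,d,s,A)$; this is non-increasing in $n$, and $\lambda^*(d,s)=\lim_{n\to\infty}\lambda^*(n,d,s)$. *)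

theory Defs
  imports Complex_Main
begin

text \<open>Vectors of F_2^n: functions nat => bool vanishing outside {0..<n};
  addition is pointwise exclusive or.\<close>

definition F2vec :: "nat \<Rightarrow> (nat \<Rightarrow> bool) set" where
  "F2vec n = {x. \<forall>i\<ge>n. \<not> x i}"

definition vadd :: "(nat \<Rightarrow> bool) \<Rightarrow> (nat \<Rightarrow> bool) \<Rightarrow> (nat \<Rightarrow> bool)" where
  "vadd x y = (\<lambda>i. x i \<noteq> y i)"

definition vsum :: "(nat \<Rightarrow> bool) set \<Rightarrow> (nat \<Rightarrow> bool)" where
  "vsum S = (\<lambda>i. odd (card {x\<in>S. x i}))"

text \<open>U is a d-dimensional linear subspace of F_2^n: it has a basis B of d
  linearly independent vectors (over F_2, a linear combination is the sum of a subset)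
  and U is the span of B.\<close>
definition subspace_dim :: "nat \<Rightarrow> nat \<Rightarrow> (nat \<Rightarrow> bool) set \<Rightarrow> bool" where
  "subspace_dim n d U \<longleftrightarrow> (\<exists>B. B \<subseteq> F2vec n \<and> finite B \<and> card B = d \<and>
      (\<forall>S\<subseteq>B. S \<noteq> {} \<longrightarrow> vsum S \<noteq> (\<lambda>_. False)) \<and>
      U = vsum ` Pow B)"

definition flats :: "nat \<Rightarrow> nat \<Rightarrow> (nat \<Rightarrow> bool) set set" where
  "flats n d = {Q. \<exists>x0\<in>F2vec n. \<exists>U. subspace_dim n d U \<and> Q = vadd x0 ` U}"

definition lam_A :: "nat \<Rightarrow> nat \<Rightarrow> nat \<Rightarrow> (nat \<Rightarrow> bool) set \<Rightarrow> real" where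
  "lam_A n d s A = real (card {Q\<in>flats n d. card (Q \<inter> A) = s}) / real (card (flats n d))"

definition lam_n :: "nat \<Rightarrow> nat \<Rightarrow> nat \<Rightarrow> real" where
  "lam_n n d s = Max ((\<lambda>A. lam_A n d s A) ` Pow (F2vec n))"

definition lam :: "nat \<Rightarrow> nat \<Rightarrow> real" where
  "lam d s = lim (\<lambda>n. lam_n n d s)"

end

(* The bounds come from a first-moment argument. Take A attaining lam_n n d s and delete each
   point of A independently with probability p = 1/s. A flat meeting A in exactly s points then
   meets what is left in exactly s - 1 points with probability s p (1 - p)^(s - 1), which is
   ((s - 1)/s)^(s - 1), while the expected number of flats meeting it in s - 1 points is at most
   lam_n n d (s - 1) times the number of flats. Hence
   lam_n n d s <= (s/(s - 1))^(s - 1) lam_n n d (s - 1), and (1 + 1/m)^m <= e. Passing to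
   complements exchanges s with 2^d - s, which gives the second pair of inequalities.

   The limit lam d s exists because lam_n n d s is non-increasing in n: averaging over the affine
   automorphisms of F_2^(n+1), which act transitively on d-flats, the d-flats inside the
   hyperplane F_2^n see on average the same density as all d-flats. *)

theory Submission
  imports Defs "HOL-Library.FuncSet"
begin

section \<open>Vectors over F_2\<close>

abbreviation vzero :: "nat \<Rightarrow> bool" where
  "vzero \<equiv> (\<lambda>_. False)"

abbreviation vspan :: "(nat \<Rightarrow> bool) set \<Rightarrow> (nat \<Rightarrow> bool) set" where
  "vspan B \<equiv> vsum ` Pow B"

definition vindep :: "(nat \<Rightarrow> bool) set \<Rightarrow> bool" where
  "vindep B \<longleftrightarrow> (\<forall>S\<subseteq>B. S \<noteq> {} \<longrightarrow> vsum S \<noteq> vzero)"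

lemma vadd_assoc: "vadd (vadd x y) z = vadd x (vadd y z)"
  unfolding vadd_def by auto

lemma vadd_self [simp]: "vadd x x = vzero"
  unfolding vadd_def by auto

lemma vadd_vzero [simp]: "vadd vzero x = x" "vadd x vzero = x"
  unfolding vadd_def by auto

lemma vadd_cancel_left [simp]: "vadd x (vadd x y) = y"
  unfolding vadd_def by auto

lemma vadd_eq_vzero_iff: "vadd x y = vzero \<longleftrightarrow> x = y"
  unfolding vadd_def by (auto simp: fun_eq_iff)

lemma inj_vadd: "inj (vadd x)"
  by (metis injI vadd_cancel_left)

lemma vsum_empty [simp]: "vsum {} = vzero"
  unfolding vsum_def by simp

lemma vsum_singleton [simp]: "vsum {x} = x"
proof
  fix i
  have "{y \<in> {x}. y i} = (if x i then {x} else {})" by auto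
  then show "vsum {x} i = x i" unfolding vsum_def by simp
qed

lemma card_sym_diff_plus_twice_Int:
  assumes "finite A" "finite B"
  shows "card (sym_diff A B) + 2 * card (A \<inter> B) = card A + card B"
proof -
  have "card A = card (A - B) + card (A \<inter> B)"
    using card_Int_Diff[OF assms(1), of B] by simp
  moreover have "card B = card (B - A) + card (A \<inter> B)"
    using card_Int_Diff[OF assms(2), of A] by (simp add: Int_commute)
  moreover have "card ((A - B) \<union> (B - A)) = card (A - B) + card (B - A)"
    using assms by (intro card_Un_disjoint) auto
  ultimately show ?thesis by simp
qed

lemma vsum_sym_diff:
  assumes "finite S" "finite T"
  shows "vsum (sym_diff S T) = vadd (vsum S) (vsum T)"
proof
  fix i
  let ?S = "{x \<in> S. x i}" and ?T = "{x \<in> T. x i}"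
  have "card (sym_diff ?S ?T) + 2 * card (?S \<inter> ?T) = card ?S + card ?T"
    using assms by (intro card_sym_diff_plus_twice_Int) auto
  then have "even (card (sym_diff ?S ?T) + 2 * card (?S \<inter> ?T)) = even (card ?S + card ?T)"
    by (rule arg_cong)
  then have "odd (card (sym_diff ?S ?T)) \<longleftrightarrow> odd (card ?S) \<noteq> odd (card ?T)"
    by auto
  moreover have "{x \<in> sym_diff S T. x i} = sym_diff ?S ?T" by auto
  ultimately show "vsum (sym_diff S T) i = vadd (vsum S) (vsum T) i"
    unfolding vsum_def vadd_def by simp
qed

lemma vsum_insert:
  assumes "finite S" "x \<notin> S"
  shows "vsum (insert x S) = vadd x (vsum S)"
proof -
  have "insert x S = sym_diff {x} S" using assms by auto
  then show ?thesis using vsum_sym_diff[of "{x}" S] assms by simp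
qed

lemma F2vec_vadd: "x \<in> F2vec n \<Longrightarrow> y \<in> F2vec n \<Longrightarrow> vadd x y \<in> F2vec n"
  unfolding F2vec_def vadd_def by auto

lemma F2vec_vsum:
  assumes "S \<subseteq> F2vec n"
  shows "vsum S \<in> F2vec n"
proof -
  have "\<not> vsum S i" if "n \<le> i" for i
  proof -
    have "{x \<in> S. x i} = {}" using assms that unfolding F2vec_def by auto
    then show ?thesis unfolding vsum_def by (simp only: card.empty) simp
  qed
  then show ?thesis unfolding F2vec_def by auto
qed

lemma F2vec_mono: "m \<le> n \<Longrightarrow> F2vec m \<subseteq> F2vec n"
  unfolding F2vec_def by auto

lemma bij_betw_F2vec_Pow: "bij_betw (\<lambda>x. {i. x i}) (F2vec n) (Pow {..<n})"
proof (rule bij_betwI[where g = "\<lambda>S i. i \<in> S"])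
  show "(\<lambda>x. {i. x i}) \<in> F2vec n \<rightarrow> Pow {..<n}"
    unfolding F2vec_def using not_less by blast
  show "(\<lambda>S i. i \<in> S) \<in> Pow {..<n} \<rightarrow> F2vec n"
    unfolding F2vec_def by auto
qed auto

lemma finite_F2vec [simp]: "finite (F2vec n)"
  using bij_betw_finite[OF bij_betw_F2vec_Pow] by simp

lemma card_F2vec: "card (F2vec n) = 2 ^ n"
  using bij_betw_same_card[OF bij_betw_F2vec_Pow] by (simp add: card_Pow)

lemma subset_vspan: "B \<subseteq> vspan B"
proof
  fix v assume "v \<in> B"
  then have "vsum {v} \<in> vspan B" by (intro imageI) simp
  then show "v \<in> vspan B" by simp
qed

lemma vspan_subset_F2vec: "B \<subseteq> F2vec n \<Longrightarrow> vspan B \<subseteq> F2vec n"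
  using F2vec_vsum by blast

lemma inj_on_vsum_Pow:
  assumes "vindep B" "finite B"
  shows "inj_on vsum (Pow B)"
proof
  fix S T assume S: "S \<in> Pow B" and T: "T \<in> Pow B" and eq: "vsum S = vsum T"
  have "finite S" "finite T" using S T by (auto intro: finite_subset[OF _ assms(2)])
  then have "vsum (sym_diff S T) = vzero"
    using vsum_sym_diff[of S T] eq by simp
  moreover have "sym_diff S T \<subseteq> B" using S T by auto
  ultimately have "sym_diff S T = {}"
    using assms(1) unfolding vindep_def by blast
  then show "S = T" by auto
qed

lemma card_vspan:
  assumes "vindep B" "finite B"
  shows "card (vspan B) = 2 ^ card B"
  using card_image[OF inj_on_vsum_Pow[OF assms]] card_Pow assms(2) by simp

lemma vindep_insert:
  assumes "vindep B" "finite B" "v \<notin> vspan B"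
  shows "vindep (insert v B)"
  unfolding vindep_def
proof (intro allI impI)
  fix S assume S: "S \<subseteq> insert v B" "S \<noteq> {}"
  show "vsum S \<noteq> vzero"
  proof (cases "v \<in> S")
    case False
    then show ?thesis using assms(1) S unfolding vindep_def by blast
  next
    case True
    have "S - {v} \<subseteq> B" using S by auto
    moreover have "finite (S - {v})" using calculation by (rule finite_subset[OF _ assms(2)])
    moreover have "vsum S = vadd v (vsum (S - {v}))"
      using vsum_insert[of "S - {v}" v] True calculation(2) by (simp add: insert_absorb)
    ultimately show ?thesis using assms(3) by (auto simp: vadd_eq_vzero_iff)
  qed
qed

lemma vindep_extend:
  assumes "B \<subseteq> F2vec m" "finite B" "vindep B" "card B \<le> k" "k \<le> m"
  shows "\<exists>B'. B \<subseteq> B' \<and> B' \<subseteq> F2vec m \<and> finite B' \<and> vindep B' \<and> card B' = k"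
  using assms
proof (induction "k - card B" arbitrary: B)
  case 0
  then show ?case by (intro exI[of _ B]) auto
next
  case (Suc j)
  have "card (vspan B) = 2 ^ card B" using card_vspan Suc.prems by auto
  also have "\<dots> < 2 ^ m" using Suc.hyps(2) Suc.prems(5) by (intro power_strict_increasing) auto
  finally have "card (vspan B) < card (F2vec m)" by (simp add: card_F2vec)
  moreover have "finite (vspan B)" using Suc.prems(2) by simp
  ultimately have "\<not> F2vec m \<subseteq> vspan B" using card_mono by (metis not_le)
  then obtain v where v: "v \<in> F2vec m" "v \<notin> vspan B" by blast
  then have "v \<notin> B" using subset_vspan by blast
  then have card_insert: "card (insert v B) = Suc (card B)" using Suc.prems(2) by simp
  have "j = k - card (insert v B)" "card (insert v B) \<le> k"
    using Suc.hyps(2) card_insert by linarith+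
  moreover have "insert v B \<subseteq> F2vec m" "finite (insert v B)" "vindep (insert v B)"
    using v Suc.prems(1,2) vindep_insert[OF Suc.prems(3,2)] by auto
  ultimately show ?case
    using Suc.hyps(1)[of "insert v B"] Suc.prems(5) by blast
qed

section \<open>Flats\<close>

lemma flatsE:
  assumes "Q \<in> flats n d"
  obtains x0 B where "x0 \<in> F2vec n" "B \<subseteq> F2vec n" "finite B" "card B = d" "vindep B"
    "Q = vadd x0 ` vspan B"
  using assms unfolding flats_def subspace_dim_def vindep_def by blast

lemma flatsI:
  assumes "x0 \<in> F2vec n" "B \<subseteq> F2vec n" "finite B" "card B = d" "vindep B"
  shows "vadd x0 ` vspan B \<in> flats n d"
  using assms unfolding flats_def subspace_dim_def vindep_def by blast

lemma flat_subset_F2vec: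
  assumes "Q \<in> flats n d"
  shows "Q \<subseteq> F2vec n"
proof -
  obtain x0 B where x0: "x0 \<in> F2vec n" and B: "B \<subseteq> F2vec n" and Q: "Q = vadd x0 ` vspan B"
    using assms by (rule flatsE)
  show ?thesis
    unfolding Q by (intro image_subsetI F2vec_vadd[OF x0] subsetD[OF vspan_subset_F2vec[OF B]])
qed

lemma finite_flats: "finite (flats n d)"
  by (rule finite_subset[of _ "Pow (F2vec n)"]) (auto dest: flat_subset_F2vec)

lemma card_flat: "Q \<in> flats n d \<Longrightarrow> card Q = 2 ^ d"
proof (erule flatsE)
  fix x0 B assume B: "finite B" "card B = d" "vindep B" and Q: "Q = vadd x0 ` vspan B"
  have "card Q = card (vspan B)"
    unfolding Q by (rule card_image) (rule inj_on_subset[OF inj_vadd], simp)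
  then show ?thesis using card_vspan B by simp
qed

lemma flats_nonempty: "d \<le> n \<Longrightarrow> flats n d \<noteq> {}"
proof -
  assume "d \<le> n"
  moreover have "vindep {}" unfolding vindep_def by auto
  ultimately obtain B where "B \<subseteq> F2vec n" "finite B" "vindep B" "card B = d"
    using vindep_extend[of "{}" n d] by auto
  then have "vadd vzero ` vspan B \<in> flats n d" by (intro flatsI) (auto simp: F2vec_def)
  then show ?thesis by blast
qed

lemma flats_of_subspace:
  assumes "m \<le> n"
  shows "flats m d = {Q \<in> flats n d. Q \<subseteq> F2vec m}"
proof (intro equalityI subsetI)
  fix Q assume Q: "Q \<in> flats m d"
  then obtain x0 B where B: "x0 \<in> F2vec m" "B \<subseteq> F2vec m" "finite B" "card B = d" "vindep B"
    and Q_eq: "Q = vadd x0 ` vspan B" by (rule flatsE)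
  have "Q \<in> flats n d"
    unfolding Q_eq using F2vec_mono[OF assms] B by (intro flatsI) auto
  then show "Q \<in> {Q \<in> flats n d. Q \<subseteq> F2vec m}"
    using flat_subset_F2vec[OF Q] by simp
next
  fix Q assume "Q \<in> {Q \<in> flats n d. Q \<subseteq> F2vec m}"
  then have Q: "Q \<in> flats n d" "Q \<subseteq> F2vec m" by auto
  from Q(1) obtain x0 B where B: "B \<subseteq> F2vec n" "finite B" "card B = d" "vindep B"
    and Q_eq: "Q = vadd x0 ` vspan B" by (rule flatsE)
  have "vadd x0 (vsum {}) \<in> Q" unfolding Q_eq by blast
  then have x0: "x0 \<in> F2vec m" using Q(2) by auto
  have "B \<subseteq> F2vec m"
  proof
    fix v assume "v \<in> B"
    then have "vadd x0 v \<in> Q" unfolding Q_eq using subset_vspan by blast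
    then have "vadd x0 (vadd x0 v) \<in> F2vec m" using Q(2) F2vec_vadd[OF x0] by blast
    then show "v \<in> F2vec m" by simp
  qed
  then show "Q \<in> flats m d" unfolding Q_eq using x0 B by (intro flatsI)
qed

section \<open>Affine automorphisms of F_2^N\<close>

text \<open>The maps are taken extensional so that there are only finitely many of them.\<close>

definition flat_auts :: "nat \<Rightarrow> nat \<Rightarrow> ((nat \<Rightarrow> bool) \<Rightarrow> nat \<Rightarrow> bool) set" where
  "flat_auts N d = {T \<in> F2vec N \<rightarrow>\<^sub>E F2vec N. bij_betw T (F2vec N) (F2vec N) \<and>
      (\<forall>Q\<in>flats N d. T ` Q \<in> flats N d)}"

lemma flat_autsI:
  assumes "T \<in> F2vec N \<rightarrow>\<^sub>E F2vec N" "bij_betw T (F2vec N) (F2vec N)"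
    "\<And>Q. Q \<in> flats N d \<Longrightarrow> T ` Q \<in> flats N d"
  shows "T \<in> flat_auts N d"
  using assms unfolding flat_auts_def by blast

lemma flat_autsD:
  assumes "T \<in> flat_auts N d"
  shows "T \<in> F2vec N \<rightarrow>\<^sub>E F2vec N" "bij_betw T (F2vec N) (F2vec N)"
    "\<And>Q. Q \<in> flats N d \<Longrightarrow> T ` Q \<in> flats N d"
  using assms unfolding flat_auts_def by blast+

lemma finite_flat_auts: "finite (flat_auts N d)"
  by (rule finite_subset[of _ "F2vec N \<rightarrow>\<^sub>E F2vec N"]) (auto simp: flat_auts_def intro: finite_PiE)

lemma restrict_id_in_flat_auts: "restrict id (F2vec N) \<in> flat_auts N d"
proof (rule flat_autsI)
  show "bij_betw (restrict id (F2vec N)) (F2vec N) (F2vec N)"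
    by (rule bij_betw_cong[THEN iffD1, rotated, OF bij_betw_id]) simp
  fix Q assume "Q \<in> flats N d"
  moreover have "restrict id (F2vec N) ` Q = Q"
    using flat_subset_F2vec[OF calculation] by (auto simp: restrict_def)
  ultimately show "restrict id (F2vec N) ` Q \<in> flats N d" by simp
qed auto

lemma restrict_comp_in_flat_auts:
  assumes T: "T \<in> flat_auts N d" and g: "g \<in> flat_auts N d"
  shows "restrict (T \<circ> g) (F2vec N) \<in> flat_auts N d"
proof (rule flat_autsI)
  note T' = flat_autsD[OF T] and g' = flat_autsD[OF g]
  show "restrict (T \<circ> g) (F2vec N) \<in> F2vec N \<rightarrow>\<^sub>E F2vec N"
    using T'(1) g'(1) by (auto simp: PiE_iff)
  show "bij_betw (restrict (T \<circ> g) (F2vec N)) (F2vec N) (F2vec N)"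
    by (rule bij_betw_cong[THEN iffD1, rotated, OF bij_betw_trans[OF g'(2) T'(2)]]) auto
  fix Q assume Q: "Q \<in> flats N d"
  have "restrict (T \<circ> g) (F2vec N) ` Q = T ` g ` Q"
    using flat_subset_F2vec[OF Q] by (auto simp: restrict_def image_comp)
  then show "restrict (T \<circ> g) (F2vec N) ` Q \<in> flats N d" using T'(3) g'(3) Q by simp
qed

lemma flat_aut_image_flats:
  assumes "T \<in> flat_auts N d"
  shows "inj_on (image T) (flats N d)" "image T ` flats N d = flats N d"
proof -
  have "inj_on T (F2vec N)" using flat_autsD(2)[OF assms] by (simp add: bij_betw_def)
  then show inj: "inj_on (image T) (flats N d)"
    by (rule inj_on_subset[OF inj_on_image_Pow]) (auto dest: flat_subset_F2vec)
  show "image T ` flats N d = flats N d"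
    by (rule endo_inj_surj[OF finite_flats _ inj]) (use flat_autsD(3)[OF assms] in blast)
qed

lemma flat_aut_inverse:
  assumes g: "g \<in> flat_auts N d"
  obtains h where "h \<in> flat_auts N d" "\<And>x. x \<in> F2vec N \<Longrightarrow> h (g x) = x"
proof
  note g' = flat_autsD[OF g]
  let ?h = "restrict (inv_into (F2vec N) g) (F2vec N)"
  have h_bij: "bij_betw (inv_into (F2vec N) g) (F2vec N) (F2vec N)"
    by (rule bij_betw_inv_into[OF g'(2)])
  show hg: "?h (g x) = x" if "x \<in> F2vec N" for x
    using g'(2) that by (auto simp: bij_betw_def inv_into_f_f)
  show "?h \<in> flat_auts N d"
  proof (rule flat_autsI)
    show "?h \<in> F2vec N \<rightarrow>\<^sub>E F2vec N" using h_bij by (auto simp: bij_betw_def)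
    show "bij_betw ?h (F2vec N) (F2vec N)"
      by (rule bij_betw_cong[THEN iffD1, rotated, OF h_bij]) auto
    fix Q assume "Q \<in> flats N d"
    then obtain Q' where Q': "Q' \<in> flats N d" "Q = g ` Q'"
      using flat_aut_image_flats(2)[OF g] by blast
    have "?h ` Q = Q'"
      unfolding Q'(2) image_image using hg flat_subset_F2vec[OF Q'(1)] by (simp add: subset_iff)
    then show "?h ` Q \<in> flats N d" using Q'(1) by simp
  qed
qed

definition basis_map :: "(nat \<Rightarrow> nat \<Rightarrow> bool) \<Rightarrow> nat \<Rightarrow> (nat \<Rightarrow> bool) \<Rightarrow> nat \<Rightarrow> bool" where
  "basis_map b N y = vsum (b ` {i. i < N \<and> y i})"

locale ordered_basis =
  fixes b :: "nat \<Rightarrow> nat \<Rightarrow> bool" and N :: nat and B :: "(nat \<Rightarrow> bool) set"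
  assumes basis_bij: "bij_betw b {..<N} B"
    and basis_subset: "B \<subseteq> F2vec N"
    and basis_indep: "vindep B"
begin

abbreviation L :: "(nat \<Rightarrow> bool) \<Rightarrow> nat \<Rightarrow> bool" where
  "L \<equiv> basis_map b N"

lemma L_in_F2vec: "L y \<in> F2vec N"
  unfolding basis_map_def using basis_bij basis_subset
  by (intro F2vec_vsum) (auto simp: bij_betw_def)

lemma L_vadd: "L (vadd x y) = vadd (L x) (L y)"
proof -
  let ?P = "{i. i < N \<and> x i}" and ?R = "{i. i < N \<and> y i}"
  have inj: "inj_on b {..<N}" using basis_bij by (simp add: bij_betw_def)
  have "b ` (?P - ?R) = b ` ?P - b ` ?R" "b ` (?R - ?P) = b ` ?R - b ` ?P"
    by (auto intro!: inj_on_image_set_diff[OF inj])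
  then have image_sym_diff: "b ` sym_diff ?P ?R = sym_diff (b ` ?P) (b ` ?R)"
    by (simp add: image_Un)
  have "{i. i < N \<and> vadd x y i} = sym_diff ?P ?R"
    unfolding vadd_def by auto
  then show ?thesis
    unfolding basis_map_def using image_sym_diff by (simp add: vsum_sym_diff)
qed

lemma L_eq_vzero:
  assumes "x \<in> F2vec N" "L x = vzero"
  shows "x = vzero"
proof -
  have "b ` {i. i < N \<and> x i} \<subseteq> B" using basis_bij by (auto simp: bij_betw_def)
  then have "{i. i < N \<and> x i} = {}"
    using basis_indep assms(2) unfolding vindep_def basis_map_def by blast
  then show ?thesis using assms(1) unfolding F2vec_def by (auto simp: fun_eq_iff not_less)
qed

lemma inj_on_L: "inj_on L (F2vec N)"
proof
  fix x y assume "x \<in> F2vec N" "y \<in> F2vec N" "L x = L y"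
  then have "vadd x y = vzero"
    using L_eq_vzero[of "vadd x y"] F2vec_vadd by (simp add: L_vadd)
  then show "x = y" by (simp add: vadd_eq_vzero_iff)
qed

lemma L_vsum: "finite S \<Longrightarrow> S \<subseteq> F2vec N \<Longrightarrow> L (vsum S) = vsum (L ` S)"
proof (induction S rule: finite_induct)
  case (insert x S)
  have "L x \<notin> L ` S"
  proof
    assume "L x \<in> L ` S"
    then obtain y where "y \<in> S" "L x = L y" by auto
    moreover have "x \<in> F2vec N" "y \<in> F2vec N" using insert.prems \<open>y \<in> S\<close> by auto
    ultimately show False using inj_onD[OF inj_on_L] insert.hyps(2) by blast
  qed
  then show ?case
    using insert vsum_insert[of "L ` S" "L x"] vsum_insert[of S x] by (simp add: L_vadd)
qed (simp add: basis_map_def)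

lemma L_image_F2vec:
  assumes "d \<le> N" "b ` {..<d} = C"
  shows "L ` F2vec d = vspan C"
proof
  show "L ` F2vec d \<subseteq> vspan C"
  proof
    fix z assume "z \<in> L ` F2vec d"
    then obtain y where y: "y \<in> F2vec d" "z = L y" by auto
    have "\<forall>i. y i \<longrightarrow> i < d" using y(1) unfolding F2vec_def using not_less by blast
    then have "b ` {i. i < N \<and> y i} \<in> Pow C" using assms(2) by auto
    then show "z \<in> vspan C" unfolding y(2) basis_map_def by blast
  qed
  show "vspan C \<subseteq> L ` F2vec d"
  proof
    fix z assume "z \<in> vspan C"
    then obtain S where S: "S \<subseteq> b ` {..<d}" "z = vsum S" using assms(2) by auto
    then obtain P where P: "P \<subseteq> {..<d}" "S = b ` P" by (auto simp: subset_image_iff)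
    have "(\<lambda>i. i \<in> P) \<in> F2vec d" using P(1) unfolding F2vec_def by auto
    moreover have "{i. i < N \<and> i \<in> P} = P" using P(1) assms(1) by auto
    ultimately have "L (\<lambda>i. i \<in> P) = z" "(\<lambda>i. i \<in> P) \<in> F2vec d"
      unfolding S(2) P(2) basis_map_def by simp_all
    then show "z \<in> L ` F2vec d" by (auto intro: sym)
  qed
qed

definition affine_map :: "(nat \<Rightarrow> bool) \<Rightarrow> (nat \<Rightarrow> bool) \<Rightarrow> nat \<Rightarrow> bool" where
  "affine_map x0 = restrict (\<lambda>y. vadd x0 (L y)) (F2vec N)"

lemma affine_map_image_flat:
  assumes x0: "x0 \<in> F2vec N" and Q: "Q \<in> flats N d"
  shows "affine_map x0 ` Q \<in> flats N d"
proof -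
  from Q obtain x1 C where C: "C \<subseteq> F2vec N" "finite C" "card C = d" "vindep C"
    and Q_eq: "Q = vadd x1 ` vspan C" by (rule flatsE)
  let ?x = "vadd x0 (L x1)"
  have "affine_map x0 ` Q = (\<lambda>S. vadd x0 (L (vadd x1 (vsum S)))) ` Pow C"
    unfolding affine_map_def Q_eq using flat_subset_F2vec[OF Q] Q_eq
    by (auto simp: image_image)
  also have "\<dots> = (\<lambda>S. vadd ?x (vsum (L ` S))) ` Pow C"
  proof (rule image_cong[OF refl])
    fix S assume "S \<in> Pow C"
    then have "finite S" "S \<subseteq> F2vec N" using C(1) finite_subset[OF _ C(2)] by auto
    then show "vadd x0 (L (vadd x1 (vsum S))) = vadd ?x (vsum (L ` S))"
      by (simp add: L_vadd L_vsum vadd_assoc)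
  qed
  also have "\<dots> = vadd ?x ` vspan (L ` C)"
    by (simp add: image_image image_Pow_surj[OF refl, symmetric])
  finally have image_eq: "affine_map x0 ` Q = vadd ?x ` vspan (L ` C)" .
  have inj: "inj_on L C" using inj_on_subset[OF inj_on_L C(1)] .
  have "vindep (L ` C)"
    unfolding vindep_def
  proof (intro allI impI)
    fix S' assume "S' \<subseteq> L ` C" "S' \<noteq> {}"
    then obtain S where S: "S \<subseteq> C" "S \<noteq> {}" "S' = L ` S"
      by (auto simp: subset_image_iff)
    then have "vsum S \<noteq> vzero" "finite S" "S \<subseteq> F2vec N"
      using C finite_subset[OF S(1) C(2)] unfolding vindep_def by auto
    then show "vsum S' \<noteq> vzero"
      using L_vsum L_eq_vzero F2vec_vsum S(3) by metis
  qed
  then show ?thesis unfolding image_eq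
    using C x0 card_image[OF inj] L_in_F2vec by (intro flatsI F2vec_vadd) auto
qed

lemma affine_map_in_flat_auts:
  assumes x0: "x0 \<in> F2vec N"
  shows "affine_map x0 \<in> flat_auts N d"
proof (rule flat_autsI)
  have "inj_on (\<lambda>y. vadd x0 (L y)) (F2vec N)"
    using comp_inj_on[OF inj_on_L inj_on_subset[OF inj_vadd subset_UNIV]] by (simp add: o_def)
  moreover have "(\<lambda>y. vadd x0 (L y)) ` F2vec N \<subseteq> F2vec N"
    using F2vec_vadd[OF x0 L_in_F2vec] by auto
  ultimately have "bij_betw (\<lambda>y. vadd x0 (L y)) (F2vec N) (F2vec N)"
    using endo_inj_surj[OF finite_F2vec] by (simp add: bij_betw_def)
  then show "bij_betw (affine_map x0) (F2vec N) (F2vec N)"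
    unfolding affine_map_def by (rule bij_betw_cong[THEN iffD1, rotated]) simp
  show "affine_map x0 \<in> F2vec N \<rightarrow>\<^sub>E F2vec N"
    using F2vec_vadd[OF x0 L_in_F2vec] by (auto simp: affine_map_def)
qed (rule affine_map_image_flat[OF x0])

lemma affine_map_image_F2vec:
  assumes "d \<le> N" "b ` {..<d} = C"
  shows "affine_map x0 ` F2vec d = vadd x0 ` vspan C"
proof -
  have "affine_map x0 ` F2vec d = vadd x0 ` L ` F2vec d"
    using F2vec_mono[OF assms(1)] unfolding affine_map_def by (auto simp: image_image)
  then show ?thesis using L_image_F2vec[OF assms] by simp
qed

end

lemma ex_enumeration_extending:
  assumes "finite B'" "B \<subseteq> B'" "card B = d" "card B' = N"
  obtains b where "bij_betw b {..<N} B'" "b ` {..<d} = B"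
proof -
  have d_le_N: "d \<le> N" using card_mono[OF assms(1,2)] assms by simp
  obtain f where f: "bij_betw f {0..<d} B"
    using ex_bij_betw_nat_finite[of B] assms finite_subset[OF assms(2,1)] by auto
  obtain h where h: "bij_betw h {0..<N - d} (B' - B)"
    using ex_bij_betw_nat_finite[of "B' - B"] assms card_Diff_subset[of B B']
      finite_subset[OF assms(2,1)]
    by auto
  have "bij_betw (\<lambda>i. i - d) {d..<N} {0..<N - d}"
    using d_le_N by (auto simp: bij_betw_def inj_on_def image_minus_const_atLeastLessThan_nat)
  then have "bij_betw (\<lambda>i. h (i - d)) {d..<N} (B' - B)"
    using bij_betw_trans[OF _ h] by (simp add: o_def)
  from bij_betw_disjoint_Un[OF f this]
  have "bij_betw (\<lambda>i. if i \<in> {0..<d} then f i else h (i - d)) ({0..<d} \<union> {d..<N}) (B \<union> (B' - B))"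
    by auto
  moreover have "{0..<d} \<union> {d..<N} = {..<N}" "B \<union> (B' - B) = B'"
    using d_le_N assms(2) by auto
  moreover have "(\<lambda>i. if i \<in> {0..<d} then f i else h (i - d)) ` {..<d} = B"
    using f by (auto simp: bij_betw_def atLeast0LessThan)
  ultimately show ?thesis using that by simp
qed

lemma flat_auts_transitive:
  assumes Q: "Q \<in> flats N d" and d_le_N: "d \<le> N"
  obtains g where "g \<in> flat_auts N d" "g ` F2vec d = Q"
proof -
  from Q obtain x0 C where C: "x0 \<in> F2vec N" "C \<subseteq> F2vec N" "finite C" "card C = d" "vindep C"
    and Q_eq: "Q = vadd x0 ` vspan C" by (rule flatsE)
  obtain B where B: "C \<subseteq> B" "B \<subseteq> F2vec N" "finite B" "vindep B" "card B = N"
    using vindep_extend[OF C(2,3,5)] C(4) d_le_N by auto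
  obtain b where b: "bij_betw b {..<N} B" "b ` {..<d} = C"
    using ex_enumeration_extending[OF B(3,1) C(4) B(5)] .
  interpret ordered_basis b N B
    using b(1) B(2,4) by unfold_locales
  show ?thesis
    by (rule that[OF affine_map_in_flat_auts[OF C(1)]])
      (simp add: affine_map_image_F2vec[OF d_le_N b(2)] Q_eq)
qed

section \<open>Double counting over the automorphisms\<close>

lemma card_precompose_le:
  assumes "finite G" "G \<subseteq> extensional U" "g ` U = U" "Q \<subseteq> U"
    and comp: "\<And>T. T \<in> G \<Longrightarrow> restrict (T \<circ> g) U \<in> G"
  shows "card {T \<in> G. T ` g ` Q \<subseteq> V} \<le> card {T \<in> G. T ` Q \<subseteq> V}"
proof (rule card_inj_on_le)
  let ?phi = "\<lambda>T. restrict (T \<circ> g) U"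
  show "?phi ` {T \<in> G. T ` g ` Q \<subseteq> V} \<subseteq> {T \<in> G. T ` Q \<subseteq> V}"
  proof
    fix T' assume "T' \<in> ?phi ` {T \<in> G. T ` g ` Q \<subseteq> V}"
    then obtain T where T': "T' = ?phi T" and T: "T \<in> {T \<in> G. T ` g ` Q \<subseteq> V}"
      by (rule imageE)
    have "T' ` Q = (\<lambda>x. T (g x)) ` Q"
      unfolding T' using assms(4) by (intro image_cong) auto
    then show "T' \<in> {T \<in> G. T ` Q \<subseteq> V}"
      using comp T T' by (simp add: image_image)
  qed
  show "inj_on ?phi {T \<in> G. T ` g ` Q \<subseteq> V}"
  proof
    fix T1 T2 assume T: "T1 \<in> {T \<in> G. T ` g ` Q \<subseteq> V}" "T2 \<in> {T \<in> G. T ` g ` Q \<subseteq> V}"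
      and eq: "?phi T1 = ?phi T2"
    have "T1 y = T2 y" if "y \<in> U" for y
    proof -
      from that assms(3) have "y \<in> g ` U" by simp
      then obtain x where "y = g x" "x \<in> U" by (rule imageE)
      then show ?thesis using fun_cong[OF eq, of x] by simp
    qed
    moreover have "T1 \<in> extensional U" "T2 \<in> extensional U" using T assms(2) by auto
    ultimately show "T1 = T2" by (intro extensionalityI[of _ U]) auto
  qed
qed (use assms(1) in simp)

lemma card_flat_auts_into:
  assumes "d \<le> N" "Q \<in> flats N d"
  shows "card {T \<in> flat_auts N d. T ` Q \<subseteq> V} = card {T \<in> flat_auts N d. T ` F2vec d \<subseteq> V}"
proof -
  have ext: "flat_auts N d \<subseteq> extensional (F2vec N)"
    by (auto simp: flat_auts_def PiE_def)
  have le: "card {T \<in> flat_auts N d. T ` g ` P \<subseteq> V} \<le> card {T \<in> flat_auts N d. T ` P \<subseteq> V}"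
    if g: "g \<in> flat_auts N d" and P: "P \<subseteq> F2vec N" for g P
  proof (rule card_precompose_le[OF finite_flat_auts ext _ P])
    show "g ` F2vec N = F2vec N" using flat_autsD(2)[OF g] by (simp add: bij_betw_def)
  qed (rule restrict_comp_in_flat_auts[OF _ g])
  obtain g where g: "g \<in> flat_auts N d" "g ` F2vec d = Q"
    using flat_auts_transitive[OF assms(2,1)] .
  obtain h where h: "h \<in> flat_auts N d" "\<And>x. x \<in> F2vec N \<Longrightarrow> h (g x) = x"
    using flat_aut_inverse[OF g(1)] by blast
  have Fd: "F2vec d \<subseteq> F2vec N" by (rule F2vec_mono[OF assms(1)])
  have "h ` Q = F2vec d"
    unfolding g(2)[symmetric] image_image using h(2) Fd by (simp add: subset_iff)
  then show ?thesis
    using le[OF g(1) Fd] le[OF h(1) flat_subset_F2vec[OF assms(2)]] g(2) by simp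
qed

lemma card_flats_meeting_image:
  assumes "n \<le> N" "T \<in> flat_auts N d" "A \<subseteq> F2vec N"
  shows "card {Q' \<in> flats n d. P (card (Q' \<inter> (T ` A \<inter> F2vec n)))}
       = card {Q \<in> flats N d. T ` Q \<subseteq> F2vec n \<and> P (card (Q \<inter> A))}"
    (is "card ?L = card ?R")
proof -
  have inj: "inj_on T (F2vec N)" using flat_autsD(2)[OF assms(2)] by (simp add: bij_betw_def)
  have card_eq: "card (T ` Q \<inter> (T ` A \<inter> F2vec n)) = card (Q \<inter> A)"
    if "Q \<in> flats N d" "T ` Q \<subseteq> F2vec n" for Q
  proof -
    have Q: "Q \<subseteq> F2vec N" using flat_subset_F2vec[OF that(1)] .
    have "T ` Q \<inter> (T ` A \<inter> F2vec n) = T ` Q \<inter> T ` A" using that(2) by blast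
    also have "\<dots> = T ` (Q \<inter> A)" by (rule inj_on_image_Int[OF inj Q assms(3), symmetric])
    also have "card \<dots> = card (Q \<inter> A)"
      using Q by (intro card_image inj_on_subset[OF inj]) auto
    finally show ?thesis .
  qed
  have flats_n: "flats n d = {Q \<in> flats N d. Q \<subseteq> F2vec n}"
    by (rule flats_of_subspace[OF assms(1)])
  have image_eq: "image T ` ?R = ?L"
  proof (intro equalityI subsetI)
    fix Q' assume "Q' \<in> image T ` ?R"
    then obtain Q where Q': "Q' = T ` Q" and "Q \<in> ?R" by (rule imageE)
    then have Q: "Q \<in> flats N d" "T ` Q \<subseteq> F2vec n" "P (card (Q \<inter> A))" by auto
    show "Q' \<in> ?L"
      unfolding Q' flats_n using flat_autsD(3)[OF assms(2) Q(1)] card_eq[OF Q(1,2)] Q(2,3) by simp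
  next
    fix Q' assume "Q' \<in> ?L"
    then have Q': "Q' \<in> image T ` flats N d" "Q' \<subseteq> F2vec n"
      "P (card (Q' \<inter> (T ` A \<inter> F2vec n)))"
      unfolding flats_n flat_aut_image_flats(2)[OF assms(2)] by auto
    from Q'(1) obtain Q where Q: "Q' = T ` Q" "Q \<in> flats N d" by (rule imageE)
    have "Q \<in> ?R" using Q Q'(2,3) card_eq[OF Q(2)] by simp
    then show "Q' \<in> image T ` ?R" unfolding Q(1) by (rule imageI)
  qed
  have "inj_on (image T) ?R"
    using flat_aut_image_flats(1)[OF assms(2)] by (rule inj_on_subset) auto
  then show ?thesis unfolding image_eq[symmetric] by (rule card_image)
qed

lemma sum_card_flats_meeting_image:
  assumes "n \<le> N" "d \<le> N" "A \<subseteq> F2vec N"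
  shows "(\<Sum>T\<in>flat_auts N d. card {Q' \<in> flats n d. P (card (Q' \<inter> (T ` A \<inter> F2vec n)))})
       = card {T \<in> flat_auts N d. T ` F2vec d \<subseteq> F2vec n} * card {Q \<in> flats N d. P (card (Q \<inter> A))}"
proof -
  let ?G = "flat_auts N d" and ?S = "{Q \<in> flats N d. P (card (Q \<inter> A))}"
  let ?c = "card {T \<in> flat_auts N d. T ` F2vec d \<subseteq> F2vec n}"
  have "(\<Sum>T\<in>?G. card {Q' \<in> flats n d. P (card (Q' \<inter> (T ` A \<inter> F2vec n)))})
      = (\<Sum>T\<in>?G. card {Q \<in> ?S. T ` Q \<subseteq> F2vec n})"
    using card_flats_meeting_image[OF assms(1) _ assms(3)]
    by (intro sum.cong) (auto intro: arg_cong[where f = card])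
  also have "\<dots> = (\<Sum>T\<in>?G. \<Sum>Q\<in>?S. of_bool (T ` Q \<subseteq> F2vec n))"
    using finite_flats by (simp add: Int_def)
  also have "\<dots> = (\<Sum>Q\<in>?S. \<Sum>T\<in>?G. of_bool (T ` Q \<subseteq> F2vec n))"
    by (rule sum.swap)
  also have "\<dots> = (\<Sum>Q\<in>?S. ?c)"
    using finite_flat_auts card_flat_auts_into[OF assms(2)]
    by (intro sum.cong) (simp_all add: Int_def)
  finally show ?thesis by simp
qed

lemma lam_A_le_lam_n: "A \<subseteq> F2vec n \<Longrightarrow> lam_A n d s A \<le> lam_n n d s"
  unfolding lam_n_def by (rule Max_ge) auto

lemma lam_n_attained:
  obtains A where "A \<subseteq> F2vec n" "lam_n n d s = lam_A n d s A"
proof -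
  have "lam_n n d s \<in> (\<lambda>A. lam_A n d s A) ` Pow (F2vec n)"
    unfolding lam_n_def by (rule Max_in) auto
  then show ?thesis using that by auto
qed

lemma lam_n_nonneg: "0 \<le> lam_n n d s"
proof -
  obtain A where "lam_n n d s = lam_A n d s A" by (rule lam_n_attained)
  then show ?thesis unfolding lam_A_def by simp
qed

lemma card_flats_meeting_le_lam_n:
  assumes "A \<subseteq> F2vec n"
  shows "real (card {Q \<in> flats n d. card (Q \<inter> A) = s}) \<le> lam_n n d s * card (flats n d)"
proof (cases "card (flats n d) = 0")
  case True
  then have "card {Q \<in> flats n d. card (Q \<inter> A) = s} = 0"
    using card_mono[OF finite_flats, of "{Q \<in> flats n d. card (Q \<inter> A) = s}" n d] by simp
  then show ?thesis using True by simp
next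
  case False
  then show ?thesis
    using lam_A_le_lam_n[OF assms, of d s] unfolding lam_A_def by (simp add: divide_le_eq)
qed

text \<open>Averaged over all automorphisms T, the density of T ` A inside F_2^n equals the density
  of A, since by transitivity every d-flat of F_2^(n+1) is mapped into F_2^n by equally many T.\<close>

lemma lam_n_Suc_le:
  assumes "d \<le> n"
  shows "lam_n (Suc n) d s \<le> lam_n n d s"
proof -
  obtain A where A: "A \<subseteq> F2vec (Suc n)" "lam_n (Suc n) d s = lam_A (Suc n) d s A"
    by (rule lam_n_attained)
  let ?G = "flat_auts (Suc n) d"
  let ?c = "card {T \<in> ?G. T ` F2vec d \<subseteq> F2vec n}"
  let ?X = "card {Q \<in> flats (Suc n) d. card (Q \<inter> A) = s}"
  have le: "n \<le> Suc n" "d \<le> Suc n" using assms by auto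
  have count_all: "card ?G * card (flats n d) = ?c * card (flats (Suc n) d)"
    using sum_card_flats_meeting_image[OF le A(1), of "\<lambda>_. True"] by simp
  have "card ?G > 0"
    using finite_flat_auts restrict_id_in_flat_auts[of "Suc n" d] by (auto simp: card_gt_0_iff)
  moreover have "card (flats n d) > 0"
    using finite_flats flats_nonempty[OF assms] by (auto simp: card_gt_0_iff)
  ultimately have "?c * card (flats (Suc n) d) > 0"
    unfolding count_all[symmetric] by simp
  then have c_pos: "?c > 0" and flats_pos: "card (flats (Suc n) d) > 0"
    by simp_all
  have "real ?c * real ?X
      = (\<Sum>T\<in>?G. real (card {Q \<in> flats n d. card (Q \<inter> (T ` A \<inter> F2vec n)) = s}))"
    using sum_card_flats_meeting_image[OF le A(1), of "\<lambda>k. k = s"] by (simp flip: of_nat_sum)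
  also have "\<dots> \<le> (\<Sum>T\<in>?G. lam_n n d s * card (flats n d))"
    by (intro sum_mono card_flats_meeting_le_lam_n) auto
  also have "\<dots> = real ?c * (lam_n n d s * card (flats (Suc n) d))"
    using arg_cong[OF count_all, of real] by (simp add: algebra_simps)
  finally have "real ?X \<le> lam_n n d s * card (flats (Suc n) d)"
    using c_pos by simp
  then show ?thesis
    using A(2) flats_pos unfolding lam_A_def by (simp add: divide_le_eq)
qed

lemma lam_n_tendsto_lam: "(\<lambda>n. lam_n n d s) \<longlonglongrightarrow> lam d s"
proof -
  have "decseq (\<lambda>n. lam_n (n + d) d s)"
    using lam_n_Suc_le by (intro decseq_SucI) simp
  moreover have "\<forall>n. 0 \<le> lam_n (n + d) d s" using lam_n_nonneg by blast
  ultimately obtain L where "(\<lambda>n. lam_n (n + d) d s) \<longlonglongrightarrow> L"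
    by (rule decseq_convergent)
  then have "(\<lambda>n. lam_n n d s) \<longlonglongrightarrow> L" by (rule LIMSEQ_offset)
  moreover from this have "lam d s = L" unfolding lam_def by (rule limI)
  ultimately show ?thesis by simp
qed

lemma lam_nonneg: "0 \<le> lam d s"
  using LIMSEQ_le_const[OF lam_n_tendsto_lam] lam_n_nonneg by blast

section \<open>Random deletion\<close>

text \<open>The probability that deleting each element of X independently with probability p
  leaves exactly B.\<close>

definition subset_prob :: "real \<Rightarrow> 'a set \<Rightarrow> 'a set \<Rightarrow> real" where
  "subset_prob p X B = p ^ card (X - B) * (1 - p) ^ card B"

lemma subset_prob_nonneg: "0 \<le> p \<Longrightarrow> p \<le> 1 \<Longrightarrow> 0 \<le> subset_prob p X B"
  unfolding subset_prob_def by simp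

lemma sum_subset_prob_marginal:
  assumes "finite K" "finite R" "K \<inter> R = {}"
  shows "(\<Sum>B\<in>Pow (K \<union> R). subset_prob p (K \<union> R) B * f (B \<inter> K))
       = (\<Sum>C\<in>Pow K. subset_prob p K C * f C)"
  using assms(2,3)
proof (induction R rule: finite_induct)
  case empty
  show ?case by (rule sum.cong) (simp_all add: Int_absorb2)
next
  case (insert a R)
  let ?X = "K \<union> R"
  have a: "a \<notin> K" "a \<notin> ?X" using insert by auto
  have X: "finite ?X" using assms(1) insert.hyps(1) by simp
  have inj: "inj_on (insert a) (Pow ?X)"
    using a(2) by (intro inj_onI) (metis Diff_insert_absorb PowD subsetD)
  have drop_a: "subset_prob p (insert a ?X) B = p * subset_prob p ?X B" if "B \<in> Pow ?X" for B
  proof -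
    have "insert a ?X - B = insert a (?X - B)" using that a(2) by auto
    then show ?thesis unfolding subset_prob_def using X a(2) by simp
  qed
  have keep_a: "subset_prob p (insert a ?X) (insert a B) = (1 - p) * subset_prob p ?X B"
    if "B \<in> Pow ?X" for B
  proof -
    have "insert a ?X - insert a B = ?X - B" "a \<notin> B" "finite B"
      using that a(2) finite_subset[OF _ X] by auto
    then show ?thesis unfolding subset_prob_def by simp
  qed
  have "(\<Sum>B\<in>Pow (K \<union> insert a R). subset_prob p (K \<union> insert a R) B * f (B \<inter> K))
      = (\<Sum>B\<in>Pow ?X \<union> insert a ` Pow ?X. subset_prob p (insert a ?X) B * f (B \<inter> K))"
    by (simp add: Pow_insert)
  also have "\<dots> = (\<Sum>B\<in>Pow ?X. subset_prob p (insert a ?X) B * f (B \<inter> K))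
      + (\<Sum>B\<in>Pow ?X. subset_prob p (insert a ?X) (insert a B) * f (insert a B \<inter> K))"
    using X a(2) by (subst sum.union_disjoint) (auto simp: sum.reindex[OF inj])
  also have "\<dots> = (\<Sum>B\<in>Pow ?X. p * (subset_prob p ?X B * f (B \<inter> K)))
      + (\<Sum>B\<in>Pow ?X. (1 - p) * (subset_prob p ?X B * f (B \<inter> K)))"
    using a(1) by (intro arg_cong2[where f = "(+)"] sum.cong refl) (auto simp: drop_a keep_a)
  also have "\<dots> = (\<Sum>B\<in>Pow ?X. subset_prob p ?X B * f (B \<inter> K))"
    by (simp only: sum_distrib_left[symmetric]) (simp add: algebra_simps)
  finally show ?case using insert by simp
qed

lemma sum_subset_prob: "finite X \<Longrightarrow> (\<Sum>B\<in>Pow X. subset_prob p X B) = 1"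
  using sum_subset_prob_marginal[of "{}" X p "\<lambda>_. 1"] by (simp add: subset_prob_def)

lemma sum_subset_prob_lose_one:
  assumes "finite A" "card (Q \<inter> A) = s" "1 \<le> s"
  shows "(\<Sum>B\<in>{B \<in> Pow A. card (Q \<inter> B) = s - 1}. subset_prob p A B)
       = real s * p * (1 - p) ^ (s - 1)"
proof -
  let ?K = "Q \<inter> A"
  have K: "finite ?K" "finite (A - Q)" "?K \<inter> (A - Q) = {}" "?K \<union> (A - Q) = A"
    using assms(1) by auto
  have "B \<inter> ?K = Q \<inter> B" if "B \<subseteq> A" for B using that by auto
  then have "{B \<in> Pow A. card (Q \<inter> B) = s - 1} = Pow A \<inter> {B. card (B \<inter> ?K) = s - 1}"
    by auto
  then have "(\<Sum>B\<in>{B \<in> Pow A. card (Q \<inter> B) = s - 1}. subset_prob p A B)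
      = (\<Sum>B\<in>Pow A. subset_prob p A B * of_bool (card (B \<inter> ?K) = s - 1))"
    using sum_mult_of_bool_eq[of "Pow A"] assms(1) by simp
  also have "\<dots> = (\<Sum>C\<in>Pow ?K. subset_prob p ?K C * of_bool (card C = s - 1))"
    using sum_subset_prob_marginal[OF K(1-3), of p "\<lambda>C. of_bool (card C = s - 1)"] K(4) by simp
  also have "\<dots> = (\<Sum>C\<in>Pow ?K \<inter> {C. card C = s - 1}. subset_prob p ?K C)"
    by (rule sum_mult_of_bool_eq) (simp only: finite_Pow_iff K(1))
  also have "Pow ?K \<inter> {C. card C = s - 1} = {C. C \<subseteq> ?K \<and> card C = s - 1}" by auto
  also have "(\<Sum>C\<in>{C. C \<subseteq> ?K \<and> card C = s - 1}. subset_prob p ?K C)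
      = (\<Sum>C\<in>{C. C \<subseteq> ?K \<and> card C = s - 1}. p * (1 - p) ^ (s - 1))"
  proof (rule sum.cong[OF refl])
    fix C assume C: "C \<in> {C. C \<subseteq> ?K \<and> card C = s - 1}"
    then have "card (?K - C) = 1"
      using assms(2,3) K(1) card_Diff_subset[of C ?K] finite_subset[of C ?K] by auto
    then show "subset_prob p ?K C = p * (1 - p) ^ (s - 1)"
      using C unfolding subset_prob_def by simp
  qed
  also have "\<dots> = card {C. C \<subseteq> ?K \<and> card C = s - 1} * (p * (1 - p) ^ (s - 1))"
    by simp
  also have "card {C. C \<subseteq> ?K \<and> card C = s - 1} = s"
    using n_subsets[OF K(1), of "s - 1"] assms(2,3) binomial_symmetric[of "s - 1" s] by simp
  finally show ?thesis by simp
qed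

text \<open>The first moment method for a random subset B of A: a set meeting A in s points meets B
  in s - 1 points with probability s p (1 - p)^(s - 1).\<close>

lemma card_meeting_le_by_deletion:
  fixes F :: "'a set set"
  assumes "finite F" "finite A" "1 \<le> s" "0 \<le> p" "p \<le> 1"
    and bound: "\<And>B. B \<subseteq> A \<Longrightarrow> real (card {Q \<in> F. card (Q \<inter> B) = s - 1}) \<le> M"
  shows "real (card {Q \<in> F. card (Q \<inter> A) = s}) * (real s * p * (1 - p) ^ (s - 1)) \<le> M"
proof -
  let ?w = "subset_prob p A"
  let ?hit = "\<lambda>Q. {B \<in> Pow A. card (Q \<inter> B) = s - 1}"
  have "real (card {Q \<in> F. card (Q \<inter> A) = s}) * (real s * p * (1 - p) ^ (s - 1))
      = (\<Sum>Q\<in>{Q \<in> F. card (Q \<inter> A) = s}. \<Sum>B\<in>?hit Q. ?w B)"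
    using sum_subset_prob_lose_one[OF assms(2) _ assms(3)] by simp
  also have "\<dots> \<le> (\<Sum>Q\<in>F. \<Sum>B\<in>?hit Q. ?w B)"
    using assms(1,4,5) by (intro sum_mono2 sum_nonneg subset_prob_nonneg) auto
  also have "\<dots> = (\<Sum>Q\<in>F. \<Sum>B\<in>Pow A. ?w B * of_bool (card (Q \<inter> B) = s - 1))"
  proof (rule sum.cong[OF refl])
    fix Q
    have "?hit Q = Pow A \<inter> {B. card (Q \<inter> B) = s - 1}" by auto
    then show "(\<Sum>B\<in>?hit Q. ?w B) = (\<Sum>B\<in>Pow A. ?w B * of_bool (card (Q \<inter> B) = s - 1))"
      using sum_mult_of_bool_eq[of "Pow A"] assms(2) by simp
  qed
  also have "\<dots> = (\<Sum>B\<in>Pow A. ?w B * (\<Sum>Q\<in>F. of_bool (card (Q \<inter> B) = s - 1)))"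
    by (subst sum.swap) (simp add: sum_distrib_left)
  also have "\<dots> = (\<Sum>B\<in>Pow A. ?w B * real (card {Q \<in> F. card (Q \<inter> B) = s - 1}))"
    using assms(1) by (simp add: Int_def)
  also have "\<dots> \<le> (\<Sum>B\<in>Pow A. ?w B * M)"
    using assms(4,5) by (intro sum_mono mult_left_mono bound subset_prob_nonneg) auto
  also have "\<dots> = M"
    using sum_subset_prob[OF assms(2)] by (simp flip: sum_distrib_right)
  finally show ?thesis .
qed

lemma lam_n_le_mult_lam_n_pred:
  assumes "2 \<le> s"
  shows "lam_n n d s \<le> (real s / (real s - 1)) ^ (s - 1) * lam_n n d (s - 1)"
proof -
  obtain A where A: "A \<subseteq> F2vec n" "lam_n n d s = lam_A n d s A" by (rule lam_n_attained)
  let ?X = "card {Q \<in> flats n d. card (Q \<inter> A) = s}" and ?F = "card (flats n d)"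
  define c where "c = ((real s - 1) / real s) ^ (s - 1)"
  have c_pos: "0 < c" unfolding c_def using assms by simp
  have "real ?X * (real s * (1 / real s) * (1 - 1 / real s) ^ (s - 1)) \<le> lam_n n d (s - 1) * ?F"
    using assms finite_subset[OF A(1) finite_F2vec] A(1) finite_flats
    by (intro card_meeting_le_by_deletion card_flats_meeting_le_lam_n) auto
  moreover have "real s * (1 / real s) * (1 - 1 / real s) ^ (s - 1) = c"
    unfolding c_def using assms by (simp add: field_simps)
  ultimately have X: "real ?X * c \<le> lam_n n d (s - 1) * ?F" by simp
  have "lam_n n d s * c \<le> lam_n n d (s - 1)"
  proof (cases "?F = 0")
    case True
    then show ?thesis using A(2) lam_n_nonneg unfolding lam_A_def by simp
  next
    case False
    have "lam_n n d s * c = real ?X * c / ?F" using A(2) unfolding lam_A_def by simp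
    also have "\<dots> \<le> lam_n n d (s - 1) * ?F / ?F" using X by (intro divide_right_mono) auto
    also have "\<dots> = lam_n n d (s - 1)" using False by simp
    finally show ?thesis .
  qed
  then have "lam_n n d s \<le> lam_n n d (s - 1) / c" using c_pos by (simp add: field_simps)
  also have "\<dots> = (real s / (real s - 1)) ^ (s - 1) * lam_n n d (s - 1)"
    unfolding c_def by (simp add: power_divide field_simps)
  finally show ?thesis .
qed

section \<open>Complements\<close>

lemma lam_n_complement_le:
  assumes "s \<le> 2 ^ d"
  shows "lam_n n d s \<le> lam_n n d (2 ^ d - s)"
proof -
  obtain A where A: "A \<subseteq> F2vec n" "lam_n n d s = lam_A n d s A" by (rule lam_n_attained)
  have "card (Q \<inter> A) = s \<longleftrightarrow> card (Q \<inter> (F2vec n - A)) = 2 ^ d - s" if "Q \<in> flats n d" for Q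
  proof -
    have Q: "Q \<subseteq> F2vec n" "finite Q" "card Q = 2 ^ d"
      using flat_subset_F2vec[OF that] finite_subset[OF _ finite_F2vec] card_flat[OF that] by auto
    moreover have "Q \<inter> (F2vec n - A) = Q - A" using Q(1) by auto
    ultimately have "card (Q \<inter> (F2vec n - A)) = 2 ^ d - card (Q \<inter> A)"
      using card_Diff_subset_Int[of Q A] by simp
    moreover have "card (Q \<inter> A) \<le> 2 ^ d" using Q card_mono[of Q "Q \<inter> A"] by simp
    ultimately show ?thesis using assms by auto
  qed
  then have "lam_A n d s A = lam_A n d (2 ^ d - s) (F2vec n - A)"
    unfolding lam_A_def by (metis (no_types, lifting))
  then show ?thesis using A(2) lam_A_le_lam_n[of "F2vec n - A"] by simp
qed

lemma lam_n_complement: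
  assumes "s \<le> 2 ^ d"
  shows "lam_n n d (2 ^ d - s) = lam_n n d s"
proof (rule antisym)
  have "2 ^ d - (2 ^ d - s) = s" using assms by simp
  then show "lam_n n d (2 ^ d - s) \<le> lam_n n d s"
    using lam_n_complement_le[of "2 ^ d - s" d n] by simp
  show "lam_n n d s \<le> lam_n n d (2 ^ d - s)" by (rule lam_n_complement_le[OF assms])
qed

lemma lam_complement: "s \<le> 2 ^ d \<Longrightarrow> lam d (2 ^ d - s) = lam d s"
  unfolding lam_def by (simp add: lam_n_complement)

lemma ratio_pred_power_le_exp_1:
  assumes "2 \<le> s"
  shows "(real s / (real s - 1)) ^ (s - 1) \<le> exp 1"
proof -
  define m where "m = s - 1"
  have m: "1 \<le> m" "real s = real m + 1" using assms unfolding m_def by auto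
  have "real s / (real s - 1) = 1 + 1 / real m" using m by (simp add: field_simps)
  also have "\<dots> \<le> exp (1 / real m)" by (rule exp_ge_add_one_self)
  finally have "(real s / (real s - 1)) ^ m \<le> exp (1 / real m) ^ m"
    using m by (intro power_mono) (auto simp: field_simps)
  also have "\<dots> = exp 1" using m by (simp flip: exp_of_nat_mult)
  finally show ?thesis unfolding m_def .
qed

lemma lam_le_mult_lam_pred:
  assumes "2 \<le> s"
  shows "lam d s \<le> (real s / (real s - 1)) ^ (s - 1) * lam d (s - 1) \<and>
    (real s / (real s - 1)) ^ (s - 1) * lam d (s - 1) \<le> exp 1 * lam d (s - 1)"
proof
  show "lam d s \<le> (real s / (real s - 1)) ^ (s - 1) * lam d (s - 1)"
    using lam_n_le_mult_lam_n_pred[OF assms]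
    by (intro LIMSEQ_le[OF lam_n_tendsto_lam tendsto_mult_left[OF lam_n_tendsto_lam]]) simp
  show "(real s / (real s - 1)) ^ (s - 1) * lam d (s - 1) \<le> exp 1 * lam d (s - 1)"
    by (rule mult_right_mono[OF ratio_pred_power_le_exp_1[OF assms] lam_nonneg])
qed

theorem theorem1p5:
  fixes d :: nat
  assumes "d > 1"
  shows "(\<forall>s::nat. 2 \<le> s \<and> s \<le> 2 ^ d \<longrightarrow>
            lam d s \<le> (real s / (real s - 1)) ^ (s - 1) * lam d (s - 1) \<and>
            (real s / (real s - 1)) ^ (s - 1) * lam d (s - 1) \<le> exp 1 * lam d (s - 1))
       \<and> (\<forall>s::nat. s \<le> 2 ^ d - 2 \<longrightarrow>
            lam d s \<le> ((2 ^ d - real s) / (2 ^ d - real s - 1)) ^ (2 ^ d - s - 1) * lam d (s + 1) \<and>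
            ((2 ^ d - real s) / (2 ^ d - real s - 1)) ^ (2 ^ d - s - 1) * lam d (s + 1)
              \<le> exp 1 * lam d (s + 1))"
proof (intro conjI allI impI)
  fix s :: nat
  assume "2 \<le> s \<and> s \<le> 2 ^ d"
  then show "lam d s \<le> (real s / (real s - 1)) ^ (s - 1) * lam d (s - 1)"
    and "(real s / (real s - 1)) ^ (s - 1) * lam d (s - 1) \<le> exp 1 * lam d (s - 1)"
    using lam_le_mult_lam_pred by blast+
next
  fix s :: nat
  assume s: "s \<le> 2 ^ d - 2"
  have "(2::nat) ^ 1 \<le> 2 ^ d" using assms by (intro power_increasing) auto
  then have le: "2 \<le> 2 ^ d - s" "s + 1 \<le> 2 ^ d" "s \<le> 2 ^ d" using s by auto
  then have "real (2 ^ d - s) = 2 ^ d - real s" "2 ^ d - s - 1 = 2 ^ d - (s + 1)"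
    by (simp_all add: of_nat_diff)
  then show "lam d s \<le> ((2 ^ d - real s) / (2 ^ d - real s - 1)) ^ (2 ^ d - s - 1) * lam d (s + 1)"
    and "((2 ^ d - real s) / (2 ^ d - real s - 1)) ^ (2 ^ d - s - 1) * lam d (s + 1)
        \<le> exp 1 * lam d (s + 1)"
    using lam_le_mult_lam_pred[OF le(1), of d] lam_complement[OF le(3)] lam_complement[OF le(2)]
    by simp_all
qed

end
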